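(* Let $(F,<_F)$ and $(G,<_G)$ be ordered groups and let $\prec$ be the ordering of $F*G$ described in the context. Then the canonical homomorphism $F*G\to F$ (killing $G$) is an order-homomorphism with respect to $\prec$ and $<_F$, but if $F$ and $G$ are both nontrivial, the canonical homomorphism $F*G\to G$ (killing $F$) is not an order-homomorphism with respect to $\prec$ and $<_G$.
   Context: A homomorphism $\phi$ between ordered groups is an order-homomorphism if $x\le y$ implies $\phi(x)\le\phi(y)$. Construction of $\prec$: order $F\times G$ lexicographically ($(f,g)<(f',g')$ iff $f<_Ff'$, or $f=f'$ and $g<_Gg'$); in $R=\mathbb{Z}(F\times G)$ call a nonzero element positive if the coefficient of its largest group element is a positive integer. Let $\rho\colon F*G\to M_2(R[t])$ be the homomorphism with $\rho(f)=\begin{pmatrix} f&(f-1)t\\0&1\end{pmatrix}$, $\rho(g)=\begin{pmatrix}1&0\\(g-1)t&g\end{pmatrix}$; it is injective. Order matrix positions $(1,1)$, $(2,2)$, then the off-diagonal ones in a fixed order. A nonzero $M=\sum_iM_it^i$ is positive if for the least $n$ with $M_n\ne0$ the first nonzero entry of $M_n$ is positive in $R$. Set $x\prec y$ iff $\rho(y)-\rho(x)$ is positive. *)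

theory Defs
  imports "HOL-Analysis.Analysis" "HOL-Library.Poly_Mapping" "HOL-Library.Product_Plus"
begin

text \<open>Groups are written additively (type class group_add, NOT assumed commutative).
  An ordered group: a strict total order invariant under left and right translation.\<close>

definition bi_ordered_group :: "'a::{group_add,linorder} itself \<Rightarrow> bool" where
  "bi_ordered_group _ \<longleftrightarrow> (\<forall>a b c::'a. a < b \<longrightarrow> c + a < c + b \<and> a + c < b + c)"

text \<open>Free product F*G as the set of reduced words: letters from F (Inl) or G (Inr),
  no identity letters, consecutive letters from different factors.\<close>

definition reduced_word :: "('f::group_add + 'g::group_add) list \<Rightarrow> bool" where
  "reduced_word w \<longleftrightarrow> (\<forall>a\<in>set w. a \<noteq> Inl 0 \<and> a \<noteq> Inr 0) \<and> successively (\<lambda>a b. isl a \<noteq> isl b) w"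

definition proj_F :: "('f::group_add + 'g::group_add) list \<Rightarrow> 'f" where
  "proj_F w = sum_list (map (case_sum id (\<lambda>_. 0)) w)"
definition proj_G :: "('f::group_add + 'g::group_add) list \<Rightarrow> 'g" where
  "proj_G w = sum_list (map (case_sum (\<lambda>_. 0) id) w)"

definition lex_less :: "('f::linorder \<times> 'g::linorder) \<Rightarrow> 'f \<times> 'g \<Rightarrow> bool" where
  "lex_less p q \<longleftrightarrow> fst p < fst q \<or> (fst p = fst q \<and> snd p < snd q)"

text \<open>The group ring R = Z(F\<times>G) is ('f \<times> 'g) =>0 int (convolution product).
  Positive: nonzero and the coefficient of the largest group element is positive.\<close>
definition R_pos :: "(('f::{group_add,linorder} \<times> 'g::{group_add,linorder}) \<Rightarrow>\<^sub>0 int) \<Rightarrow> bool" where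
  "R_pos r \<longleftrightarrow> (\<exists>h\<in>Poly_Mapping.keys r. (\<forall>h'\<in>Poly_Mapping.keys r. h' \<noteq> h \<longrightarrow> lex_less h' h) \<and> Poly_Mapping.lookup r h > 0)"

type_synonym ('f,'g) Rt = "nat \<Rightarrow>\<^sub>0 (('f \<times> 'g) \<Rightarrow>\<^sub>0 int)"
type_synonym ('f,'g) Mat = "('f,'g) Rt ^ 2 ^ 2"

definition mat2 :: "'a \<Rightarrow> 'a \<Rightarrow> 'a \<Rightarrow> 'a \<Rightarrow> 'a ^ 2 ^ 2" where
  "mat2 a b c d = (\<chi> i j. if i = 1 then (if j = 1 then a else b) else (if j = 1 then c else d))"

definition grp_elt :: "'f \<times> 'g \<Rightarrow> ('f \<times> 'g) \<Rightarrow>\<^sub>0 int" where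
  "grp_elt h = Poly_Mapping.single h 1"

definition const_t :: "(('f \<times> 'g) \<Rightarrow>\<^sub>0 int) \<Rightarrow> ('f,'g) Rt" where
  "const_t r = Poly_Mapping.single 0 r"

definition t_var :: "('f::group_add,'g::group_add) Rt" where
  "t_var = Poly_Mapping.single 1 1"

definition rho_letter :: "('f::group_add + 'g::group_add) \<Rightarrow> ('f,'g) Mat" where
  "rho_letter a = (case a of
      Inl f \<Rightarrow> mat2 (const_t (grp_elt (f, 0))) (const_t (grp_elt (f, 0) - 1) * t_var) 0 1
    | Inr g \<Rightarrow> mat2 1 0 (const_t (grp_elt (0, g) - 1) * t_var) (const_t (grp_elt (0, g))))"

definition rho :: "('f::group_add + 'g::group_add) list \<Rightarrow> ('f,'g) Mat" where
  "rho w = foldr (\<lambda>a M. rho_letter a ** M) w (mat 1)"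

definition positions :: "(2 \<times> 2) list" where
  "positions = [(1,1), (2,2), (1,2), (2,1)]"

definition coeff_entry :: "('f,'g) Mat \<Rightarrow> nat \<Rightarrow> 2 \<times> 2 \<Rightarrow> (('f \<times> 'g) \<Rightarrow>\<^sub>0 int)" where
  "coeff_entry M n p = Poly_Mapping.lookup (M $ fst p $ snd p) n"

definition M_pos :: "('f::{group_add,linorder},'g::{group_add,linorder}) Mat \<Rightarrow> bool" where
  "M_pos M \<longleftrightarrow> (\<exists>n. (\<exists>p\<in>set positions. coeff_entry M n p \<noteq> 0)
      \<and> (\<forall>m<n. \<forall>p\<in>set positions. coeff_entry M m p = 0)
      \<and> R_pos (hd (filter (\<lambda>r. r \<noteq> 0) (map (coeff_entry M n) positions))))"

definition fp_less :: "('f::{group_add,linorder} + 'g::{group_add,linorder}) list \<Rightarrow> ('f + 'g) list \<Rightarrow> bool" where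
  "fp_less x y \<longleftrightarrow> M_pos (rho y - rho x)"

definition fp_le :: "('f::{group_add,linorder} + 'g::{group_add,linorder}) list \<Rightarrow> ('f + 'g) list \<Rightarrow> bool" where
  "fp_le x y \<longleftrightarrow> x = y \<or> fp_less x y"

definition order_hom_on :: "'a set \<Rightarrow> ('a \<Rightarrow> 'a \<Rightarrow> bool) \<Rightarrow> ('b \<Rightarrow> 'b \<Rightarrow> bool) \<Rightarrow> ('a \<Rightarrow> 'b) \<Rightarrow> bool" where
  "order_hom_on A le1 le2 \<phi> \<longleftrightarrow> (\<forall>x\<in>A. \<forall>y\<in>A. le1 x y \<longrightarrow> le2 (\<phi> x) (\<phi> y))"

end

theory Submission imports Defs begin

text \<open>The constant term (in t) of \<open>\<rho>(w)\<close> is the diagonal matrix with entries the group elements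
  \<open>(\<pi>\<^sub>F w, 0)\<close> and \<open>(0, \<pi>\<^sub>G w)\<close>, because the off-diagonal entries of the generators are
  multiples of t.  When \<open>\<pi>\<^sub>F x \<noteq> \<pi>\<^sub>F y\<close>, the comparison of x and y is therefore decided by
  the (1,1) entry of the constant term of \<open>\<rho>(y) - \<rho>(x)\<close>, namely
  \<open>(\<pi>\<^sub>F y, 0) - (\<pi>\<^sub>F x, 0)\<close>, which is positive exactly when \<open>\<pi>\<^sub>F x < \<pi>\<^sub>F y\<close>.  Nothing
  comparable holds for G: the word \<open>f g\<close> with \<open>f > 0 > g\<close> lies above the empty word
  because of its F-part, while its G-projection is negative.\<close>

lemma lookup_mult_zero:
  fixes p q :: "nat \<Rightarrow>\<^sub>0 'a::semiring_0"
  shows "Poly_Mapping.lookup (p * q) 0 = Poly_Mapping.lookup p 0 * Poly_Mapping.lookup q 0"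
proof -
  have "(\<Sum>k. Poly_Mapping.lookup q k when 0 = l + k) = (Poly_Mapping.lookup q 0 when l = 0)"
    for l :: nat
    by (simp add: when_def)
  then show ?thesis by (simp add: lookup_mult mult_when)
qed

lemma grp_elt_add: "grp_elt a * grp_elt b = grp_elt (a + b)"
  by (simp add: grp_elt_def mult_single)

lemma grp_elt_zero: "grp_elt (0::'f::group_add, 0::'g::group_add) = 1"
  by (simp add: grp_elt_def flip: zero_prod_def)

lemma lookup_const_t_zero: "Poly_Mapping.lookup (const_t r) 0 = r"
  by (simp add: const_t_def)

lemma lookup_t_var_zero: "Poly_Mapping.lookup t_var 0 = 0"
  by (simp add: t_var_def lookup_single)

lemma lookup_rho_zero:
  "Poly_Mapping.lookup (rho (w::('f::group_add + 'g::group_add) list) $ i $ j) 0 =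
     (if i \<noteq> j then 0 else if i = 1 then grp_elt (proj_F w, 0::'g) else grp_elt (0::'f, proj_G w))"
proof (induction w arbitrary: i j)
  case Nil
  then show ?case by (simp add: rho_def mat_def proj_F_def proj_G_def grp_elt_zero)
next
  case (Cons a w)
  have "Poly_Mapping.lookup (rho (a # w) $ i $ j) 0 =
      (\<Sum>k\<in>UNIV. Poly_Mapping.lookup (rho_letter a $ i $ k) 0 * Poly_Mapping.lookup (rho w $ k $ j) 0)"
    by (simp add: rho_def matrix_matrix_mult_def lookup_sum lookup_mult_zero)
  then show ?case
    unfolding sum_2 Cons.IH
    using exhaust_2[of i] exhaust_2[of j]
    by (cases a) (auto simp: rho_letter_def mat2_def lookup_mult_zero
        lookup_const_t_zero lookup_t_var_zero proj_F_def proj_G_def grp_elt_add)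
qed

lemma grp_elt_diff_nonzero: "a \<noteq> b \<Longrightarrow> grp_elt a - grp_elt b \<noteq> 0"
  by (metis grp_elt_def eq_iff_diff_eq_0 lookup_single_eq lookup_single_not_eq zero_neq_one)

lemma R_pos_grp_elt_diff_iff:
  assumes "a \<noteq> b"
  shows "R_pos (grp_elt a - grp_elt b) \<longleftrightarrow> lex_less b a"
proof -
  have lookup: "Poly_Mapping.lookup (grp_elt a - grp_elt b) h = (if h = a then 1 else if h = b then -1 else 0)"
    for h
    using assms by (simp add: grp_elt_def lookup_minus lookup_single)
  then have "Poly_Mapping.keys (grp_elt a - grp_elt b) = {a, b}"
    using assms by (auto simp: in_keys_iff split: if_splits)
  then show ?thesis
    unfolding R_pos_def using lookup assms by (auto simp: lex_less_def)
qed

lemma M_pos_iff_first_entry: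
  assumes "coeff_entry M 0 (1,1) \<noteq> 0"
  shows "M_pos M \<longleftrightarrow> R_pos (coeff_entry M 0 (1,1))"
proof
  assume "M_pos M"
  then obtain n where "\<forall>m<n. \<forall>p\<in>set positions. coeff_entry M m p = 0"
    and pos: "R_pos (hd (filter (\<lambda>r. r \<noteq> 0) (map (coeff_entry M n) positions)))"
    unfolding M_pos_def by blast
  with assms have "n = 0" by (auto simp: positions_def)
  with pos assms show "R_pos (coeff_entry M 0 (1,1))" by (simp add: positions_def)
next
  assume "R_pos (coeff_entry M 0 (1,1))"
  with assms show "M_pos M"
    unfolding M_pos_def by (intro exI[of _ 0]) (auto simp: positions_def)
qed

lemma fp_less_iff_proj_F_less:
  assumes "proj_F x \<noteq> proj_F y"
  shows "fp_less x y \<longleftrightarrow> proj_F x < proj_F y"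
proof -
  have entry: "coeff_entry (rho y - rho x) 0 (1,1) = grp_elt (proj_F y, 0) - grp_elt (proj_F x, 0)"
    by (simp add: coeff_entry_def lookup_minus lookup_rho_zero)
  have "coeff_entry (rho y - rho x) 0 (1,1) \<noteq> 0"
    unfolding entry using assms by (intro grp_elt_diff_nonzero) simp
  then have "fp_less x y \<longleftrightarrow> R_pos (coeff_entry (rho y - rho x) 0 (1,1))"
    by (simp add: fp_less_def M_pos_iff_first_entry)
  also have "\<dots> \<longleftrightarrow> lex_less (proj_F x, 0::'b) (proj_F y, 0)"
    unfolding entry using assms by (simp add: R_pos_grp_elt_diff_iff)
  also have "\<dots> \<longleftrightarrow> proj_F x < proj_F y"
    by (simp add: lex_less_def)
  finally show ?thesis .
qed

lemma bi_ordered_group_neg_less_zero_iff: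
  fixes a :: "'a::{group_add,linorder}"
  assumes "bi_ordered_group TYPE('a)"
  shows "- a < 0 \<longleftrightarrow> 0 < a"
  using assms[unfolded bi_ordered_group_def, rule_format, of "- a" 0 a]
    assms[unfolded bi_ordered_group_def, rule_format, of 0 a "- a"]
  by auto

lemma bi_ordered_group_ex_pos:
  fixes a :: "'a::{group_add,linorder}"
  assumes "bi_ordered_group TYPE('a)" and "a \<noteq> 0"
  obtains b :: 'a where "0 < b"
proof (cases "0 < a")
  case False
  with assms(2) have "a < 0" by simp
  then have "0 < - a"
    using bi_ordered_group_neg_less_zero_iff[OF assms(1), of "- a"] by simp
  then show ?thesis by (rule that)
qed (rule that)

theorem corollary4p4:
  assumes "bi_ordered_group TYPE('f::{group_add,linorder})"
      and "bi_ordered_group TYPE('g::{group_add,linorder})"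
  shows "order_hom_on {w::('f + 'g) list. reduced_word w} fp_le (\<le>) proj_F
     \<and> ((\<exists>a::'f. a \<noteq> 0) \<and> (\<exists>b::'g. b \<noteq> 0) \<longrightarrow>
          \<not> order_hom_on {w::('f + 'g) list. reduced_word w} fp_le (\<le>) proj_G)"
proof (intro conjI impI)
  show "order_hom_on {w::('f + 'g) list. reduced_word w} fp_le (\<le>) proj_F"
    unfolding order_hom_on_def fp_le_def
  proof (intro ballI impI)
    fix x y :: "('f + 'g) list"
    assume "x = y \<or> fp_less x y"
    then show "proj_F x \<le> proj_F y"
      using fp_less_iff_proj_F_less[of x y] by (cases "proj_F x = proj_F y") auto
  qed
next
  assume "(\<exists>a::'f. a \<noteq> 0) \<and> (\<exists>b::'g. b \<noteq> 0)"
  then obtain a :: 'f and b :: 'g where "a \<noteq> 0" "b \<noteq> 0" by blast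
  obtain f :: 'f where "0 < f" using bi_ordered_group_ex_pos[OF assms(1) \<open>a \<noteq> 0\<close>] .
  obtain g' :: 'g where "0 < g'" using bi_ordered_group_ex_pos[OF assms(2) \<open>b \<noteq> 0\<close>] .
  define g where "g = - g'"
  have "g < 0"
    using \<open>0 < g'\<close> bi_ordered_group_neg_less_zero_iff[OF assms(2)] by (simp add: g_def)
  define y :: "('f + 'g) list" where "y = [Inl f, Inr g]"
  have "reduced_word y" "reduced_word ([]::('f + 'g) list)"
    using \<open>0 < f\<close> \<open>g < 0\<close> by (auto simp: y_def reduced_word_def)
  moreover have "fp_le [] y"
    using fp_less_iff_proj_F_less[of "[]" y] \<open>0 < f\<close>
    by (simp add: fp_le_def y_def proj_F_def)
  moreover have "\<not> proj_G ([]::('f + 'g) list) \<le> proj_G y"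
    using \<open>g < 0\<close> by (simp add: y_def proj_G_def)
  ultimately show "\<not> order_hom_on {w::('f + 'g) list. reduced_word w} fp_le (\<le>) proj_G"
    unfolding order_hom_on_def by blast
qed

end
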